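(* Let $q\ge 4$ be a prime power and $\rho(q)=\min\{\rho_q(u,v): u,v\in\mathcal{D}_q\}$. Then $\rho(q)=0$ if $3$ divides $q-1$, and $\rho(q)=2$ otherwise.
   Context: $\mathbb{F}_q$ is the finite field with $q$ elements. Hamming distance $d(u,v)=|\{i:u_i\ne v_i\}|$ on $\mathbb{F}_q^3$; $B(u)=\{v: d(u,v)\le 1\}$; $E(u)=\bigcup_{\lambda\in\mathbb{F}_q}B(\lambda u)$. $\mathcal{D}_q=\{(u_1,u_2,u_3)\in\mathbb{F}_q^3: u_1,u_2,u_3 \text{ pairwise distinct and nonzero}\}$, $\widetilde{B}(u)=B(u)\cap\mathcal{D}_q$, $\widetilde{E}(u)=E(u)\cap\mathcal{D}_q$. For $u,v\in\mathbb{F}_q^3$, $\rho_q(u,v)=0$ if $|\widetilde{E}(u)|=0$ or $|\widetilde{E}(v)|=0$, and otherwise $\rho_q(u,v)=\sum_{\mu\in\mathbb{F}_q^*}|\widetilde{B}(u)\cap\widetilde{B}(\mu v)|$. *)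

theory Defs
  imports Main
begin

text \<open>Vectors of F_q^3 are represented as triples; the field F_q is a type of
class field and finite, with q = CARD('a).\<close>

type_synonym 'a vec3 = "'a \<times> 'a \<times> 'a"

definition hdist :: "'a vec3 \<Rightarrow> 'a vec3 \<Rightarrow> nat" where
  "hdist u v = (case u of (u1, u2, u3) \<Rightarrow> case v of (v1, v2, v3) \<Rightarrow>
     (if u1 \<noteq> v1 then 1 else 0) + (if u2 \<noteq> v2 then 1 else 0) + (if u3 \<noteq> v3 then 1 else 0))"

definition smul3 :: "'a::times \<Rightarrow> 'a vec3 \<Rightarrow> 'a vec3" where
  "smul3 c u = (case u of (u1, u2, u3) \<Rightarrow> (c * u1, c * u2, c * u3))"

definition ball1 :: "'a vec3 \<Rightarrow> 'a vec3 set" where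
  "ball1 u = {v. hdist u v \<le> 1}"

definition Eset :: "('a::times) vec3 \<Rightarrow> 'a vec3 set" where
  "Eset u = (\<Union>c\<in>UNIV. ball1 (smul3 c u))"

definition Dset :: "('a::zero) vec3 set" where
  "Dset = {(u1, u2, u3). u1 \<noteq> u2 \<and> u1 \<noteq> u3 \<and> u2 \<noteq> u3 \<and> u1 \<noteq> 0 \<and> u2 \<noteq> 0 \<and> u3 \<noteq> 0}"

definition Btilde :: "('a::zero) vec3 \<Rightarrow> 'a vec3 set" where
  "Btilde u = ball1 u \<inter> Dset"

definition Etilde :: "('a::{times,zero}) vec3 \<Rightarrow> 'a vec3 set" where
  "Etilde u = Eset u \<inter> Dset"

definition rho_q :: "('a::{field,finite}) vec3 \<Rightarrow> 'a vec3 \<Rightarrow> nat" where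
  "rho_q u v = (if card (Etilde u) = 0 \<or> card (Etilde v) = 0 then 0
     else (\<Sum>\<mu>\<in>UNIV - {0}. card (Btilde u \<inter> Btilde (smul3 \<mu> v))))"

definition rho :: "('a::{field,finite}) itself \<Rightarrow> nat" where
  "rho _ = Min {rho_q u v | u v :: 'a vec3. u \<in> Dset \<and> v \<in> Dset}"

end

theory Submission
  imports Defs "HOL-Computational_Algebra.Polynomial"
begin

text \<open>
  For \<open>u = (a, b, c)\<close> and \<open>v = (x, y, z)\<close> in \<open>\<D>\<^sub>q\<close>, the balls around \<open>u\<close> and \<open>\<mu> v\<close> are
  disjoint unless \<open>\<mu> v\<close> agrees with \<open>u\<close> in some coordinate, so only \<open>\<mu> \<in> {a/x, b/y, c/z}\<close>
  contribute to \<open>\<rho>\<^sub>q(u, v)\<close>. If two of these ratios coincide, \<open>u\<close> and \<open>\<mu> v\<close> are at distance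
  at most 1 and their balls share two points of \<open>\<D>\<^sub>q\<close> as soon as \<open>q \<ge> 5\<close>. If the ratios are
  distinct, \<open>\<rho>\<^sub>q(u, v)\<close> counts the failures in the two chains of equalities
  \<open>az = bx = cy\<close> and \<open>ay = cx = bz\<close>. A chain of three terms fails 0, 2 or 3 times, never once,
  so \<open>\<rho>\<^sub>q(u, v) < 2\<close> forces both chains to hold, and then \<open>y/x\<close> is a nontrivial cube root of
  unity. Such roots exist exactly when \<open>3 dvd q - 1\<close>, and explicit pairs attain the values 0 and 2.
\<close>

lemma card_doubleton_Int:
  "p \<noteq> q \<Longrightarrow> card ({p, q} \<inter> A) = of_bool (p \<in> A) + of_bool (q \<in> A)"
  by (cases "p \<in> A"; cases "q \<in> A") auto

lemma ex_not_in_set_if_length_less: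
  fixes xs :: "'a::finite list"
  assumes "length xs < card (UNIV :: 'a set)"
  shows "\<exists>t. t \<notin> set xs"
proof (rule ccontr)
  assume "\<nexists>t. t \<notin> set xs"
  then have "set xs = UNIV"
    by auto
  then show False
    using card_length[of xs] assms by simp
qed

lemma smul3_triple [simp]: "smul3 m (x, y, z) = (m * x, m * y, m * z)"
  by (simp add: smul3_def)

lemma hdist_triple [simp]:
  "hdist (a, b, c) (x, y, z) =
     (if a \<noteq> x then 1 else 0) + (if b \<noteq> y then 1 else 0) + (if c \<noteq> z then 1 else 0)"
  by (simp add: hdist_def)

lemma mem_Dset_iff [simp]:
  "(a, b, c) \<in> Dset \<longleftrightarrow> a \<noteq> b \<and> a \<noteq> c \<and> b \<noteq> c \<and> a \<noteq> 0 \<and> b \<noteq> 0 \<and> c \<noteq> 0"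
  by (simp add: Dset_def)

lemma smul3_mem_Dset:
  fixes \<mu> :: "'a::field"
  shows "\<mu> \<noteq> 0 \<Longrightarrow> v \<in> Dset \<Longrightarrow> smul3 \<mu> v \<in> Dset"
  by (cases v) auto

lemma ball1_Int_ball1_disjoint:
  assumes "a \<noteq> a'" "b \<noteq> b'" "c \<noteq> c'"
  shows "ball1 (a, b, c) \<inter> ball1 (a', b', c') = {}"
  using assms by (auto simp: ball1_def split: if_splits)

lemma ball1_Int_ball1_fst_eq:
  assumes "b \<noteq> b'" "c \<noteq> c'"
  shows "ball1 (a, b, c) \<inter> ball1 (a, b', c') = {(a, b, c'), (a, b', c)}"
  using assms by (auto simp: ball1_def split: if_splits)

lemma ball1_Int_ball1_snd_eq:
  assumes "a \<noteq> a'" "c \<noteq> c'"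
  shows "ball1 (a, b, c) \<inter> ball1 (a', b, c') = {(a, b, c'), (a', b, c)}"
  using assms by (auto simp: ball1_def split: if_splits)

lemma ball1_Int_ball1_thd_eq:
  assumes "a \<noteq> a'" "b \<noteq> b'"
  shows "ball1 (a, b, c) \<inter> ball1 (a', b', c) = {(a, b', c), (a', b, c)}"
  using assms by (auto simp: ball1_def split: if_splits)

lemma Btilde_Int_Btilde: "Btilde u \<inter> Btilde v = ball1 u \<inter> ball1 v \<inter> Dset"
  by (auto simp: Btilde_def)

lemma card_Btilde_Int_fst_eq:
  assumes "(a, b, c) \<in> Dset" "(a, b', c') \<in> Dset" "b \<noteq> b'" "c \<noteq> c'"
  shows "card (Btilde (a, b, c) \<inter> Btilde (a, b', c')) = of_bool (c' \<noteq> b) + of_bool (b' \<noteq> c)"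
  using assms by (simp add: Btilde_Int_Btilde ball1_Int_ball1_fst_eq card_doubleton_Int)

lemma card_Btilde_Int_snd_eq:
  assumes "(a, b, c) \<in> Dset" "(a', b, c') \<in> Dset" "a \<noteq> a'" "c \<noteq> c'"
  shows "card (Btilde (a, b, c) \<inter> Btilde (a', b, c')) = of_bool (c' \<noteq> a) + of_bool (a' \<noteq> c)"
  using assms by (simp add: Btilde_Int_Btilde ball1_Int_ball1_snd_eq card_doubleton_Int)

lemma card_Btilde_Int_thd_eq:
  assumes "(a, b, c) \<in> Dset" "(a', b', c) \<in> Dset" "a \<noteq> a'" "b \<noteq> b'"
  shows "card (Btilde (a, b, c) \<inter> Btilde (a', b', c)) = of_bool (b' \<noteq> a) + of_bool (a' \<noteq> b)"
  using assms by (simp add: Btilde_Int_Btilde ball1_Int_ball1_thd_eq card_doubleton_Int)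

lemma two_le_card_Btilde_Int:
  fixes u w :: "'a::{zero,finite} vec3"
  assumes u: "u \<in> Dset" and w: "w \<in> Dset" and close: "hdist u w \<le> 1"
    and card: "5 \<le> card (UNIV :: 'a set)"
  shows "2 \<le> card (Btilde u \<inter> Btilde w)"
proof (cases "u = w")
  case False
  have "{u, w} \<subseteq> Btilde u \<inter> Btilde w"
    using u w close by (cases u; cases w) (auto simp: Btilde_def ball1_def split: if_splits)
  from card_mono[OF _ this] False show ?thesis by simp
next
  case True
  obtain a b c where abc: "u = (a, b, c)" by (cases u)
  obtain t :: 'a where t: "t \<notin> set [0, a, b, c]"
    using ex_not_in_set_if_length_less[of "[0, a, b, c]"] card by auto
  have "{(a, b, c), (a, b, t)} \<subseteq> Btilde u \<inter> Btilde w"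
    using u t True abc by (auto simp: Btilde_def ball1_def)
  moreover have "card {(a, b, c), (a, b, t)} = 2"
    using t by auto
  ultimately show ?thesis
    using card_mono[OF finite] by metis
qed

lemma card_Etilde_pos:
  fixes u :: "'a::{monoid_mult,zero,finite} vec3"
  assumes "u \<in> Dset"
  shows "card (Etilde u) \<noteq> 0"
proof -
  obtain a b c where "u = (a, b, c)" by (cases u)
  then have "u \<in> ball1 (smul3 1 u)"
    by (simp add: ball1_def)
  then have "u \<in> Etilde u"
    using assms by (auto simp: Etilde_def Eset_def)
  then show ?thesis by (auto simp: card_eq_0_iff)
qed

lemma rho_q_eq_sum_ratios:
  fixes a b c x y z :: "'a::{field,finite}"
  assumes u: "(a, b, c) \<in> Dset" and v: "(x, y, z) \<in> Dset"
  shows "rho_q (a, b, c) (x, y, z) =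
    (\<Sum>\<mu>\<in>{a/x, b/y, c/z}. card (Btilde (a, b, c) \<inter> Btilde (smul3 \<mu> (x, y, z))))"
proof -
  have "rho_q (a, b, c) (x, y, z) =
      (\<Sum>\<mu>\<in>UNIV - {0}. card (Btilde (a, b, c) \<inter> Btilde (smul3 \<mu> (x, y, z))))"
    using card_Etilde_pos[OF u] card_Etilde_pos[OF v] by (simp add: rho_q_def)
  also have "\<dots> = (\<Sum>\<mu>\<in>{a/x, b/y, c/z}. card (Btilde (a, b, c) \<inter> Btilde (smul3 \<mu> (x, y, z))))"
  proof (rule sum.mono_neutral_right)
    show "{a/x, b/y, c/z} \<subseteq> UNIV - {0}"
      using u v by auto
    show "\<forall>\<mu>\<in>UNIV - {0} - {a/x, b/y, c/z}. card (Btilde (a, b, c) \<inter> Btilde (smul3 \<mu> (x, y, z))) = 0"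
    proof
      fix \<mu> assume "\<mu> \<in> UNIV - {0} - {a/x, b/y, c/z}"
      then have "a \<noteq> \<mu> * x" "b \<noteq> \<mu> * y" "c \<noteq> \<mu> * z"
        using v by (auto simp: field_simps)
      then show "card (Btilde (a, b, c) \<inter> Btilde (smul3 \<mu> (x, y, z))) = 0"
        by (simp add: Btilde_Int_Btilde ball1_Int_ball1_disjoint)
    qed
  qed simp
  finally show ?thesis .
qed

definition unequal_pairs :: "'a \<Rightarrow> 'a \<Rightarrow> 'a \<Rightarrow> nat" where
  "unequal_pairs p q r = of_bool (p \<noteq> q) + of_bool (q \<noteq> r) + of_bool (r \<noteq> p)"

lemma unequal_pairs_less_2_iff: "unequal_pairs p q r < 2 \<longleftrightarrow> p = q \<and> q = r"
  by (auto simp: unequal_pairs_def)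

lemma rho_q_distinct_ratios:
  fixes a b c x y z :: "'a::{field,finite}"
  assumes u: "(a, b, c) \<in> Dset" and v: "(x, y, z) \<in> Dset"
    and ratios: "a/x \<noteq> b/y" "a/x \<noteq> c/z" "b/y \<noteq> c/z"
  shows "rho_q (a, b, c) (x, y, z) =
    unequal_pairs (a*z) (b*x) (c*y) + unequal_pairs (a*y) (c*x) (b*z)"
proof -
  have nz: "x \<noteq> 0" "y \<noteq> 0" "z \<noteq> 0" "a \<noteq> 0" "b \<noteq> 0" "c \<noteq> 0"
    using u v by auto
  have scaled: "smul3 \<mu> (x, y, z) \<in> Dset" if "\<mu> \<in> {a/x, b/y, c/z}" for \<mu>
    using that nz v by (intro smul3_mem_Dset) auto
  have "a/x * x = a" "b/y * y = b" "c/z * z = c"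
    "b \<noteq> a/x * y" "c \<noteq> a/x * z" "a \<noteq> b/y * x" "c \<noteq> b/y * z" "a \<noteq> c/z * x" "b \<noteq> c/z * y"
    using ratios nz by (auto simp: field_simps)
  then have cards:
    "card (Btilde (a, b, c) \<inter> Btilde (smul3 (a/x) (x, y, z))) = of_bool (a/x*z \<noteq> b) + of_bool (a/x*y \<noteq> c)"
    "card (Btilde (a, b, c) \<inter> Btilde (smul3 (b/y) (x, y, z))) = of_bool (b/y*z \<noteq> a) + of_bool (b/y*x \<noteq> c)"
    "card (Btilde (a, b, c) \<inter> Btilde (smul3 (c/z) (x, y, z))) = of_bool (c/z*y \<noteq> a) + of_bool (c/z*x \<noteq> b)"
    using card_Btilde_Int_fst_eq[OF u, of "a/x*y" "a/x*z"] scaled[of "a/x"]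
      card_Btilde_Int_snd_eq[OF u, of "b/y*x" "b/y*z"] scaled[of "b/y"]
      card_Btilde_Int_thd_eq[OF u, of "c/z*x" "c/z*y"] scaled[of "c/z"]
    by simp_all
  have products:
    "a/x*z \<noteq> b \<longleftrightarrow> a*z \<noteq> b*x" "a/x*y \<noteq> c \<longleftrightarrow> a*y \<noteq> c*x"
    "b/y*z \<noteq> a \<longleftrightarrow> b*z \<noteq> a*y" "b/y*x \<noteq> c \<longleftrightarrow> b*x \<noteq> c*y"
    "c/z*y \<noteq> a \<longleftrightarrow> c*y \<noteq> a*z" "c/z*x \<noteq> b \<longleftrightarrow> c*x \<noteq> b*z"
    using nz by (auto simp: field_simps)
  have "rho_q (a, b, c) (x, y, z) =
      card (Btilde (a, b, c) \<inter> Btilde (smul3 (a/x) (x, y, z))) +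
      card (Btilde (a, b, c) \<inter> Btilde (smul3 (b/y) (x, y, z))) +
      card (Btilde (a, b, c) \<inter> Btilde (smul3 (c/z) (x, y, z)))"
    using ratios by (simp add: rho_q_eq_sum_ratios[OF u v])
  then show ?thesis
    unfolding cards products unequal_pairs_def by linarith
qed

lemma cube_eq_of_cross_products:
  fixes a b c x y z :: "'a::field"
  assumes nz: "a \<noteq> 0" "x \<noteq> 0" "y \<noteq> 0"
    and eqs: "a*z = b*x" "b*x = c*y" "a*y = c*x" "c*x = b*z"
  shows "y^3 = x^3"
proof -
  have "a * (z*z) = a * (x*y)"
    using eqs by algebra
  then have zz: "z*z = x*y"
    using nz by simp
  have "a * (y*y) = a * (x*z)"
    using eqs by algebra
  then have yy: "y*y = x*z"
    using nz by simp
  have "y * y^3 = y * x^3"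
    using yy zz by algebra
  then show ?thesis
    using nz by simp
qed

lemma three_dvd_if_power_eq_1:
  fixes w :: "'a::monoid_mult"
  assumes w: "w^3 = 1" "w \<noteq> 1" and n: "w^n = 1"
  shows "3 dvd n"
proof -
  have "w ^ (n mod 3) = (w^3) ^ (n div 3) * w ^ (n mod 3)"
    using w by simp
  also have "\<dots> = 1"
    using n by (simp only: power_mult[symmetric] power_add[symmetric] mult_div_mod_eq)
  finally have r: "w ^ (n mod 3) = 1" .
  have "w^2 \<noteq> 1"
  proof
    assume "w^2 = 1"
    then have "w^3 = w"
      by (simp add: power2_eq_square power3_eq_cube)
    then show False
      using w by simp
  qed
  then have "n mod 3 \<noteq> 1" "n mod 3 \<noteq> 2"
    using r w(2) by auto
  then show ?thesis
    by presburger
qed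

lemma power_card_minus_one_eq_1:
  fixes x :: "'a::{field,finite}"
  assumes "x \<noteq> 0"
  shows "x ^ (card (UNIV :: 'a set) - 1) = 1"
proof -
  have "x ^ (card (UNIV :: 'a set) - 1) * (\<Prod>y\<in>UNIV - {0}. y) = (\<Prod>y\<in>UNIV - {0}. x * y)"
    by (simp add: prod.distrib card_Diff_singleton)
  also have "\<dots> = (\<Prod>y\<in>UNIV - {0}. y)"
    by (rule prod.reindex_bij_witness[of _ "\<lambda>y. y / x" "\<lambda>y. x * y"]) (use assms in auto)
  finally show ?thesis
    by simp
qed

lemma nontrivial_cube_root_iff:
  "(\<exists>w::'a::{field,finite}. w^3 = 1 \<and> w \<noteq> 1) \<longleftrightarrow> 3 dvd (card (UNIV :: 'a set) - 1)"
proof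
  assume "\<exists>w::'a. w^3 = 1 \<and> w \<noteq> 1"
  then obtain w :: 'a where w: "w^3 = 1" "w \<noteq> 1"
    by blast
  then have "w \<noteq> 0"
    by auto
  then show "3 dvd (card (UNIV :: 'a set) - 1)"
    using w by (intro three_dvd_if_power_eq_1[of w] power_card_minus_one_eq_1)
next
  assume "3 dvd (card (UNIV :: 'a set) - 1)"
  then obtain m where m: "card (UNIV :: 'a set) - 1 = 3 * m"
    by blast
  moreover have "card {0, 1::'a} \<le> card (UNIV :: 'a set)"
    by (rule card_mono) simp_all
  ultimately have "m \<noteq> 0"
    by auto
  let ?p = "monom (1::'a) m - 1"
  have p: "?p \<noteq> 0"
  proof
    assume "?p = 0"
    then have "poly ?p 0 = 0"
      by simp
    then show False
      using \<open>m \<noteq> 0\<close> by (simp add: poly_monom power_0_left)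
  qed
  have "degree ?p \<le> m"
    using degree_diff_le[of "monom 1 m" m 1] degree_monom_le[of "1::'a" m] by simp
  then have "card {x. poly ?p x = 0} \<le> m"
    by (rule order_trans[OF card_poly_roots_bound[OF p]])
  moreover have "card (UNIV - {0::'a}) = 3 * m"
    using m by (simp add: card_Diff_singleton)
  ultimately have "\<not> UNIV - {0} \<subseteq> {x. poly ?p x = 0}"
    using card_mono[OF poly_roots_finite[OF p], of "UNIV - {0}"] \<open>m \<noteq> 0\<close> by linarith
  then obtain a :: 'a where a: "a \<noteq> 0" "a ^ m \<noteq> 1"
    by (auto simp: poly_monom)
  have "(a ^ m) ^ 3 = 1"
    using power_card_minus_one_eq_1[OF a(1)] m by (simp add: power_mult[symmetric] mult.commute)
  then show "\<exists>w::'a. w^3 = 1 \<and> w \<noteq> 1"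
    using a(2) by blast
qed

lemma rho_q_ge_2_if_distinct_ratios:
  fixes a b c x y z :: "'a::{field,finite}"
  assumes u: "(a, b, c) \<in> Dset" and v: "(x, y, z) \<in> Dset"
    and ratios: "a/x \<noteq> b/y" "a/x \<noteq> c/z" "b/y \<noteq> c/z"
    and no_cube_root: "\<forall>w::'a. w^3 = 1 \<longrightarrow> w = 1"
  shows "2 \<le> rho_q (a, b, c) (x, y, z)"
proof (rule ccontr)
  assume "\<not> 2 \<le> rho_q (a, b, c) (x, y, z)"
  then have "unequal_pairs (a*z) (b*x) (c*y) < 2" "unequal_pairs (a*y) (c*x) (b*z) < 2"
    unfolding rho_q_distinct_ratios[OF u v ratios] by linarith+
  then have "y^3 = x^3"
    using u v by (intro cube_eq_of_cross_products[of a x y z b c]) (auto simp: unequal_pairs_less_2_iff)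
  then have "(y/x)^3 = 1" "y/x \<noteq> 1"
    using v by (auto simp: power_divide)
  then show False
    using no_cube_root by blast
qed

lemma rho_q_ge_2_if_equal_ratios:
  fixes a b c x y z :: "'a::{field,finite}"
  assumes u: "(a, b, c) \<in> Dset" and v: "(x, y, z) \<in> Dset"
    and ratios: "a/x = b/y \<or> a/x = c/z \<or> b/y = c/z"
    and card: "5 \<le> card (UNIV :: 'a set)"
  shows "2 \<le> rho_q (a, b, c) (x, y, z)"
proof -
  have nz: "x \<noteq> 0" "y \<noteq> 0" "z \<noteq> 0"
    using v by auto
  obtain \<mu> where \<mu>: "\<mu> \<in> {a/x, b/y, c/z}" "hdist (a, b, c) (smul3 \<mu> (x, y, z)) \<le> 1"
  proof -
    consider "a/x = b/y" | "a/x = c/z" | "b/y = c/z"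
      using ratios by blast
    then show thesis
    proof cases
      case 1
      then show thesis using nz by (intro that[of "a/x"]) (auto simp: field_simps)
    next
      case 2
      then show thesis using nz by (intro that[of "a/x"]) (auto simp: field_simps)
    next
      case 3
      then show thesis using nz by (intro that[of "b/y"]) (auto simp: field_simps)
    qed
  qed
  then have "smul3 \<mu> (x, y, z) \<in> Dset"
    using u v by (intro smul3_mem_Dset) auto
  then have "2 \<le> card (Btilde (a, b, c) \<inter> Btilde (smul3 \<mu> (x, y, z)))"
    using two_le_card_Btilde_Int[OF u _ \<mu>(2) card] by simp
  also have "\<dots> \<le> (\<Sum>\<mu>\<in>{a/x, b/y, c/z}. card (Btilde (a, b, c) \<inter> Btilde (smul3 \<mu> (x, y, z))))"
    using \<mu>(1) by (intro member_le_sum) auto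
  finally show ?thesis
    by (simp add: rho_q_eq_sum_ratios[OF u v])
qed

lemma rho_q_ge_2:
  fixes u v :: "'a::{field,finite} vec3"
  assumes u: "u \<in> Dset" and v: "v \<in> Dset"
    and no_cube_root: "\<forall>w::'a. w^3 = 1 \<longrightarrow> w = 1"
    and card: "5 \<le> card (UNIV :: 'a set)"
  shows "2 \<le> rho_q u v"
proof -
  obtain a b c x y z where "u = (a, b, c)" "v = (x, y, z)"
    by (cases u, cases v)
  then show ?thesis
    using u v rho_q_ge_2_if_distinct_ratios[OF _ _ _ _ _ no_cube_root]
      rho_q_ge_2_if_equal_ratios[OF _ _ _ card]
    by blast
qed

lemma rho_q_at_cube_root:
  fixes w :: "'a::{field,finite}"
  assumes w: "w^3 = 1" "w \<noteq> 1"
  shows "(1, w^2, w) \<in> Dset" "(1, w, w^2) \<in> Dset" "rho_q (1, w^2, w) (1, w, w^2) = 0"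
proof -
  have w0: "w \<noteq> 0"
    using w by auto
  have w2: "w^2 \<noteq> 1" "w^2 \<noteq> w"
    using w by (auto simp: power2_eq_square power3_eq_cube)
  have w4: "w^2 * w^2 = w" and "w^2 / w = w" and "w / w^2 = w^2"
    using w w0 by (auto simp: power2_eq_square power3_eq_cube field_simps)
  show u: "(1, w^2, w) \<in> Dset" and v: "(1, w, w^2) \<in> Dset"
    using w w0 w2 by auto
  have ratios: "1/1 \<noteq> w^2/w" "1/1 \<noteq> w/w^2" "w^2/w \<noteq> w/w^2"
    using w w2 \<open>w^2 / w = w\<close> \<open>w / w^2 = w^2\<close> by auto
  show "rho_q (1, w^2, w) (1, w, w^2) = 0"
    unfolding rho_q_distinct_ratios[OF u v ratios] using w4
    by (simp add: unequal_pairs_def power2_eq_square)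
qed

lemma rho_q_at_non_cube_root:
  fixes t :: "'a::{field,finite}"
  assumes t: "t \<noteq> 0" "t \<noteq> 1" "t \<noteq> -1" "t^3 \<noteq> 1"
  shows "(1, t, 1/t) \<in> Dset" "(1, t^2, t) \<in> Dset" "rho_q (1, t, 1/t) (1, t^2, t) = 2"
proof -
  have t2: "t^2 \<noteq> 1" "t^2 \<noteq> t" "1/t \<noteq> t" "1/t \<noteq> 1"
    using t by (auto simp: power2_eq_square square_eq_1_iff field_simps)
  show u: "(1, t, 1/t) \<in> Dset" and v: "(1, t^2, t) \<in> Dset"
    using t t2 by auto
  have ratios: "1/1 \<noteq> t/t^2" "1/1 \<noteq> (1/t)/t" "t/t^2 \<noteq> (1/t)/t"
    using t t2 by (auto simp: power2_eq_square field_simps)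
  have "1/t * t^2 = t" "1/t \<noteq> t * t"
    using t by (auto simp: power2_eq_square power3_eq_cube field_simps)
  then show "rho_q (1, t, 1/t) (1, t^2, t) = 2"
    unfolding rho_q_distinct_ratios[OF u v ratios]
    by (simp add: unequal_pairs_def power2_eq_square)
qed

lemma rho_eqI:
  fixes u v :: "'a::{field,finite} vec3"
  assumes "u \<in> Dset" "v \<in> Dset" "rho_q u v = n"
    and "\<And>u v :: 'a vec3. u \<in> Dset \<Longrightarrow> v \<in> Dset \<Longrightarrow> n \<le> rho_q u v"
  shows "rho TYPE('a) = n"
  unfolding rho_def
proof (rule Min_eqI)
  show "finite {rho_q u v | u v :: 'a vec3. u \<in> Dset \<and> v \<in> Dset}"
    by (rule finite_image_set2) simp_all
qed (use assms in blast)+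

theorem theorem17:
  assumes "card (UNIV :: 'a::{field,finite} set) \<ge> 4"
  shows "rho TYPE('a) = (if 3 dvd (card (UNIV :: 'a set) - 1) then 0 else 2)"
proof (cases "3 dvd (card (UNIV :: 'a set) - 1)")
  case True
  then obtain w :: 'a where "w^3 = 1" "w \<noteq> 1"
    using nontrivial_cube_root_iff by blast
  then have "rho TYPE('a) = 0"
    by (intro rho_eqI[OF rho_q_at_cube_root]) simp_all
  with True show ?thesis
    by simp
next
  case False
  then have no_cube_root: "\<forall>w::'a. w^3 = 1 \<longrightarrow> w = 1"
    using nontrivial_cube_root_iff by blast
  from False assms have card: "5 \<le> card (UNIV :: 'a set)"
    by (cases "card (UNIV :: 'a set) = 4") auto
  then obtain t :: 'a where t: "t \<notin> set [0, 1, -1]"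
    using ex_not_in_set_if_length_less[of "[0, 1, -1 :: 'a]"] by auto
  with no_cube_root have "t^3 \<noteq> 1"
    by auto
  with t have "rho TYPE('a) = 2"
    by (intro rho_eqI[OF rho_q_at_non_cube_root] rho_q_ge_2[OF _ _ no_cube_root card]) auto
  with False show ?thesis
    by simp
qed

end
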